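(* Let $\langle\eta\rangle:=B_1/(\xi_L,\xi)$, where $B_1=\langle\eta,\xi,\xi_L\rangle$. Then $HH^n_{(1-n)}(B,\langle\eta\rangle)\cong k$ for $n\in\{1,2\}$ and $0$ otherwise; $HH^n_{(2-n)}(B,\langle\eta\rangle)\cong k$ for $n\in\{5,6\}$ and $0$ otherwise; $HH^n_{(3-n)}(B,\langle\eta\rangle)\cong k$ for $n\in\{9,10\}$ and $0$ otherwise; $HH^n_{(4-n)}(B,\langle\eta\rangle)\cong k$ for $n\in\{13,14\}$ and $0$ otherwise.
   Context: Let $k$ be a field with $\operatorname{char}k\neq2,3$. Let $B$ be the graded $k$-algebra with $k$-basis $\mathrm{id}_L,\mathrm{id}_{\mathcal O},\theta$ (degree $0$) and $\eta,\xi,\xi_L$ (degree $1$), whose only nonzero products of basis elements are $\mathrm{id}_L\mathrm{id}_L=\mathrm{id}_L$, $\mathrm{id}_{\mathcal O}\mathrm{id}_{\mathcal O}=\mathrm{id}_{\mathcal O}$, $\mathrm{id}_L\xi_L=\xi_L\mathrm{id}_L=\xi_L$, $\mathrm{id}_{\mathcal O}\xi=\xi\mathrm{id}_{\mathcal O}=\xi$, $\mathrm{id}_L\eta=\eta\,\mathrm{id}_{\mathcal O}=\eta$, $\mathrm{id}_{\mathcal O}\theta=\theta\,\mathrm{id}_L=\theta$, $\theta\eta=\xi$, $\eta\theta=\xi_L$. Let $R=k\langle\mathrm{id}_L,\mathrm{id}_{\mathcal O}\rangle$, $B_+=\langle\theta,\eta,\xi,\xi_L\rangle$, $B=R\oplus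 B_+$; tensor products are over $R$. $B_1=\langle\eta,\xi,\xi_L\rangle$ and $(\xi_L,\xi)=\langle\xi_L,\xi\rangle$ are sub-bimodules of $B$. For a graded $B$-bimodule $M$, the reduced Hochschild complex is $C^n(B,M)=\operatorname{Hom}_{R\text{-}R}(B_+^{\otimes_R n},M)$ with $\delta(\phi)(a_0,\dots,a_n)=a_0\phi(a_1,\dots,a_n)+\sum_{i=1}^n(-1)^i\phi(a_0,\dots,a_{i-1}a_i,\dots,a_n)+(-1)^{n+1}\phi(a_0,\dots,a_{n-1})a_n$; $HH^n_{(m)}(B,M)$ is the cohomology of the subcomplex of cochains homogeneous of internal degree $m$ ($\deg\phi(x)=\deg x+m$). *)

theory Defs
  imports Complex_Main "HOL-Library.Function_Algebras"
begin

datatype bas = idL | idO | theta | eta | xi | xiL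

text \<open>Product of two basis elements: Some c if the product is the basis element c, None if it is 0.\<close>
fun mult :: "bas \<Rightarrow> bas \<Rightarrow> bas option" where
  "mult idL idL = Some idL"
| "mult idO idO = Some idO"
| "mult idL xiL = Some xiL"
| "mult xiL idL = Some xiL"
| "mult idO xi = Some xi"
| "mult xi idO = Some xi"
| "mult idL eta = Some eta"
| "mult eta idO = Some eta"
| "mult idO theta = Some theta"
| "mult theta idL = Some theta"
| "mult theta eta = Some xi"
| "mult eta theta = Some xiL"
| "mult _ _ = None"

fun deg :: "bas \<Rightarrow> nat" where
  "deg idL = 0" | "deg idO = 0" | "deg theta = 0"
| "deg eta = 1" | "deg xi = 1" | "deg xiL = 1"

definition Rbas :: "bas set" where "Rbas = {idL, idO}"
definition Bplus :: "bas set" where "Bplus = {theta, eta, xi, xiL}"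
definition B1bas :: "bas set" where "B1bas = {eta, xi, xiL}"
definition Ibas :: "bas set" where "Ibas = {xiL, xi}"

text \<open>The bimodule M = B_1/(xi_L, xi): its basis is the set of classes of the basis elements of
  B_1 not in the sub-bimodule spanned by xi_L, xi.  Elements of M are coordinate functions
  bas => 'k supported on Mbas.\<close>
definition Mbas :: "bas set" where "Mbas = B1bas - Ibas"

definition lactM :: "bas \<Rightarrow> (bas \<Rightarrow> 'k::field) \<Rightarrow> bas \<Rightarrow> 'k" where
  "lactM b v y = (if y \<in> Mbas then (\<Sum>z\<in>Mbas. if mult b z = Some y then v z else 0) else 0)"

definition ractM :: "(bas \<Rightarrow> 'k::field) \<Rightarrow> bas \<Rightarrow> bas \<Rightarrow> 'k" where
  "ractM v b y = (if y \<in> Mbas then (\<Sum>z\<in>Mbas. if mult z b = Some y then v z else 0) else 0)"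

text \<open>A basis element of B_+^{\<otimes>_R n} is written (e, [a_1,...,a_n]) with e in R the left idempotent
  (e a_1 = a_1); consecutive factors must share an idempotent (otherwise the tensor over R is 0).
  For n = 0 the basis of R is (idL, []) and (idO, []).\<close>
fun lcompat :: "bas \<Rightarrow> bas list \<Rightarrow> bool" where
  "lcompat e [] = True"
| "lcompat e (a # _) = (mult e a = Some a)"

definition rcompat :: "bas \<times> bas list \<Rightarrow> bas \<Rightarrow> bool" where
  "rcompat x f = (if snd x = [] then fst x = f else mult (last (snd x)) f = Some (last (snd x)))"

definition TB :: "nat \<Rightarrow> (bas \<times> bas list) set" where
  "TB n = {(e, p). e \<in> Rbas \<and> length p = n \<and> set p \<subseteq> Bplus \<and> lcompat e p \<and>
     (\<forall>i. Suc i < n \<longrightarrow> (\<exists>f\<in>Rbas. mult (p ! i) f = Some (p ! i) \<and>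
                                     mult f (p ! Suc i) = Some (p ! Suc i)))}"

definition tdeg :: "bas list \<Rightarrow> nat" where "tdeg p = sum_list (map deg p)"

text \<open>A cochain phi is given by its values on basis tensors: phi x y is the y-coordinate of phi(x) in M.
  C n m = homogeneous R-R-bimodule maps of internal degree m.\<close>
definition Cochains :: "nat \<Rightarrow> int \<Rightarrow> ((bas \<times> bas list) \<Rightarrow> bas \<Rightarrow> 'k::field) set" where
  "Cochains n m = {phi.
     (\<forall>x y. phi x y \<noteq> 0 \<longrightarrow> x \<in> TB n \<and> y \<in> Mbas \<and> int (deg y) = int (tdeg (snd x)) + m) \<and>
     (\<forall>e\<in>Rbas. \<forall>x\<in>TB n.
        lactM e (phi x) = (if fst x = e then phi x else (\<lambda>_. 0)) \<and>
        ractM (phi x) e = (if rcompat x e then phi x else (\<lambda>_. 0)))}"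

text \<open>Value of phi on the tensor a_1 \<otimes> ... \<otimes> a_n (= 1 * (a_1 \<otimes> ... \<otimes> a_n) = sum over idempotents e);
  for the empty list this is phi(1_R).\<close>
definition ev :: "((bas \<times> bas list) \<Rightarrow> bas \<Rightarrow> 'k::field) \<Rightarrow> bas list \<Rightarrow> bas \<Rightarrow> 'k" where
  "ev phi p y = (\<Sum>e\<in>{e\<in>Rbas. lcompat e p}. phi (e, p) y)"

definition hdelta :: "nat \<Rightarrow> ((bas \<times> bas list) \<Rightarrow> bas \<Rightarrow> 'k::field) \<Rightarrow> (bas \<times> bas list) \<Rightarrow> bas \<Rightarrow> 'k" where
  "hdelta n phi x y = (if x \<in> TB (Suc n) then
     (let a = snd x in
        lactM (hd a) (ev phi (tl a)) y
      + (\<Sum>i\<in>{1..n}. (-1) ^ i *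
           (case mult (a ! (i - 1)) (a ! i) of None \<Rightarrow> 0
            | Some c \<Rightarrow> ev phi (take (i - 1) a @ c # drop (Suc i) a) y))
      + (-1) ^ (Suc n) * ractM (ev phi (butlast a)) (last a) y)
     else 0)"

definition cscale :: "'k::field \<Rightarrow> ((bas \<times> bas list) \<Rightarrow> bas \<Rightarrow> 'k) \<Rightarrow> ((bas \<times> bas list) \<Rightarrow> bas \<Rightarrow> 'k)" where
  "cscale c phi = (\<lambda>x y. c * phi x y)"

definition Cocycles :: "nat \<Rightarrow> int \<Rightarrow> ((bas \<times> bas list) \<Rightarrow> bas \<Rightarrow> 'k::field) set" where
  "Cocycles n m = {phi \<in> Cochains n m. hdelta n phi = 0}"

definition Coboundaries :: "nat \<Rightarrow> int \<Rightarrow> ((bas \<times> bas list) \<Rightarrow> bas \<Rightarrow> 'k::field) set" where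
  "Coboundaries n m = (if n = 0 then {0} else hdelta (n - 1) ` Cochains (n - 1) m)"

definition HHdim :: "'k::field itself \<Rightarrow> nat \<Rightarrow> int \<Rightarrow> nat" where
  "HHdim _ n m = vector_space.dim (cscale :: 'k \<Rightarrow> _) (Cocycles n m :: (_ \<Rightarrow> _ \<Rightarrow> 'k) set)
               - vector_space.dim (cscale :: 'k \<Rightarrow> _) (Coboundaries n m :: (_ \<Rightarrow> _ \<Rightarrow> 'k) set)"

end

theory Submission
  imports Defs
begin

text \<open>
  The bimodule M = B_1/(xi_L, xi) is the line spanned by eta, on which idL acts by 1
  from the left, idO by 1 from the right and B_+ by zero.  Consequently a cochain of internal
  degree m is determined by its values at eta on the paths a_1 \<otimes> ... \<otimes> a_n from L to O in the
  quiver of B, the two outer terms of the Hochschild differential vanish, and an inner term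
  a_{i-1} a_i is nonzero only for theta.eta = xi and eta.theta = xi_L.  Encoding a path by the word
  marking its long arrows (xi, xi_L) identifies the complex of internal degree -D with the
  "word complex" of words of weight 2D + 1 (short letters weigh 1, long letters 2), whose
  differential contracts two adjacent short letters into a long one; positive degrees vanish.

  The main theorem is the case k = 1, ..., 4 of the
  resulting formula along the line of internal degree k - n; it holds over every field.
\<close>

section \<open>Linear algebra: dimensions of subquotients\<close>

context vector_space
begin

lemma independent_Un_complement:
  assumes indR: "independent R" and indPC: "independent (P \<union> C)"
    and finC: "finite C" and disj: "C \<inter> P = {}"
    and meet: "span R \<inter> span (P \<union> C) \<subseteq> span P"
  shows "independent (R \<union> C)"
proof -
  have "independent (R \<union> C')" if "C' \<subseteq> C" for C'
    using finite_subset[OF that finC] that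
  proof (induction C' rule: finite_induct)
    case empty
    then show ?case using indR by simp
  next
    case (insert c F)
    have "c \<notin> span (R \<union> F)"
    proof
      assume "c \<in> span (R \<union> F)"
      then obtain x y where xy: "c = x + y" "x \<in> span R" "y \<in> span F"
        unfolding span_Un by blast
      have "c \<in> span (P \<union> C)" and "y \<in> span (P \<union> C)"
        using insert.prems xy(3) span_mono[of F "P \<union> C"] by (auto intro: span_base)
      then have "x \<in> span (P \<union> C)"
        using xy(1) span_diff by (metis add_diff_cancel_right')
      then have xP: "x \<in> span P" using meet xy(2) by blast
      have "span P \<subseteq> span ((P \<union> C) - {c})" "span F \<subseteq> span ((P \<union> C) - {c})"
        using insert.hyps(2) insert.prems disj by (intro span_mono; blast)+
      then have "c \<in> span ((P \<union> C) - {c})"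
        using xy(1,3) xP span_add by blast
      then have "dependent (P \<union> C)"
        unfolding dependent_def using insert.prems by blast
      then show False using indPC by simp
    qed
    then show ?case
      using insert independent_insertI by (metis Un_insert_right insert_subset)
  qed
  then show ?thesis by blast
qed

lemma independent_finite_in_span:
  assumes "Z \<subseteq> span F" "finite F" "S \<subseteq> Z" "independent S"
  shows "finite S"
  using independent_span_bound[OF assms(2,4)] assms(1,3) span_mono span_span
  by (meson order_trans)

text \<open>Dimension count for a subquotient: if Z = Z' + B and Z' \<inter> B = B', then
  Z' / B' \<cong> Z / B, hence dim Z - dim B = dim Z' - dim B' (all spaces finite-dimensional).\<close>
lemma dim_diff_eq_of_sum_Int:
  assumes "subspace B" "subspace Z'" "subspace B'"
    and "B' \<subseteq> Z'" "B' \<subseteq> B" "Z' \<subseteq> Z" "B \<subseteq> Z"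
    and sum: "\<And>z. z \<in> Z \<Longrightarrow> \<exists>a b. a \<in> Z' \<and> b \<in> B \<and> z = a + b"
    and meet: "Z' \<inter> B \<subseteq> B'"
    and fin: "Z \<subseteq> span F" "finite F"
  shows "dim Z - dim B = dim Z' - dim B'"
proof -
  obtain P where P: "P \<subseteq> B'" "independent P" "B' \<subseteq> span P"
    using maximal_independent_subset by blast
  obtain Q where Q: "P \<subseteq> Q" "Q \<subseteq> Z'" "independent Q" "Z' \<subseteq> span Q"
    using maximal_independent_subset_extend[of P Z'] P assms(4) by blast
  obtain R where R: "P \<subseteq> R" "R \<subseteq> B" "independent R" "B \<subseteq> span R"
    using maximal_independent_subset_extend[of P B] P assms(5) by blast
  define C where "C = Q - P"
  have finQ: "finite Q" and finR: "finite R"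
    using independent_finite_in_span[OF fin] Q(2,3) R(2,3) assms(6,7) by blast+
  have finP: "finite P" and finC: "finite C"
    using finQ Q(1) finite_subset unfolding C_def by auto
  have QPC: "Q = P \<union> C" and CP: "C \<inter> P = {}" unfolding C_def using Q(1) by auto
  have spP: "span P = B'" using P assms(3) span_minimal by blast
  have spQ: "span (P \<union> C) = Z'" using Q assms(2) span_minimal QPC by blast
  have spR: "span R = B" using R assms(1) span_minimal by blast
  have indRC: "independent (R \<union> C)"
    by (rule independent_Un_complement[OF R(3) _ finC CP]) (use Q(3) QPC spP spQ spR meet in auto)
  have RC: "R \<inter> C = {}"
  proof (rule ccontr)
    assume "R \<inter> C \<noteq> {}"
    then obtain c where c: "c \<in> R" "c \<in> C" by blast
    have "c \<in> span P" using c meet spP spQ spR by (auto intro: span_base)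
    moreover have "span P \<subseteq> span (Q - {c})" using c CP Q(1) by (intro span_mono) auto
    ultimately have "dependent Q" unfolding dependent_def using c QPC by blast
    then show False using Q(3) by simp
  qed
  have "dim Z = card (R \<union> C)"
  proof (rule dim_unique)
    show "R \<union> C \<subseteq> Z" using R(2) Q(2) QPC assms(6,7) by auto
    show "Z \<subseteq> span (R \<union> C)"
    proof
      fix z assume "z \<in> Z"
      then obtain a b where ab: "a \<in> Z'" "b \<in> B" "z = a + b" using sum by blast
      have "a \<in> span (R \<union> C)" using ab(1) spQ R(1) span_mono[of "P \<union> C" "R \<union> C"] by blast
      moreover have "b \<in> span (R \<union> C)" using ab(2) spR span_mono[of R "R \<union> C"] by blast
      ultimately show "z \<in> span (R \<union> C)" unfolding ab(3) by (rule span_add)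
    qed
  qed (use indRC in auto)
  also have "\<dots> = card R + card C" using card_Un_disjoint[OF finR finC RC] .
  finally have "dim Z = card R + card C" .
  moreover have "dim B = card R" using dim_unique[OF R(2) R(4) R(3)] by simp
  moreover have "dim Z' = card P + card C"
    using dim_unique[OF Q(2) Q(4) Q(3) refl] QPC CP card_Un_disjoint[OF finP finC] by auto
  moreover have "dim B' = card P" using dim_unique[OF P(1) P(3) P(2)] by simp
  ultimately show ?thesis by simp
qed

lemma dim_zero_subspace: "dim {0} = 0"
  using dim_span[of "{}"] dim_eq_card_independent[OF independent_empty] by simp

end

context vector_space_pair
begin

lemma dim_image_inj:
  assumes lin: "Vector_Spaces.linear s1 s2 f" and inj: "inj_on f (vs1.span S)"
  shows "vs2.dim (f ` S) = vs1.dim S"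
proof -
  obtain B where B: "B \<subseteq> S" "vs1.independent B" "S \<subseteq> vs1.span B" "card B = vs1.dim S"
    using vs1.basis_exists by blast
  have injB: "inj_on f (vs1.span B)"
    using inj inj_on_subset vs1.span_mono[OF B(1)] by blast
  have "vs2.dim (f ` S) = card (f ` B)"
  proof (rule vs2.dim_unique)
    show "f ` B \<subseteq> f ` S" using B(1) by blast
    show "f ` S \<subseteq> vs2.span (f ` B)"
      using B(3) linear_span_image[OF lin, of B] by blast
    show "vs2.independent (f ` B)"
      by (rule linear_independent_injective_image[OF lin B(2) injB])
  qed simp
  also have "\<dots> = card B"
    using card_image inj_on_subset[OF injB vs1.span_superset] by blast
  finally show ?thesis using B(4) by simp
qed

end

section \<open>The word complex\<close>

text \<open>Words in two letters: False is a short letter of weight 1, True a long letter of weight 2.\<close>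
definition weight :: "bool list \<Rightarrow> nat" where
  "weight w = sum_list (map (\<lambda>b. if b then 2 else 1) w)"

lemma weight_Nil [simp]: "weight [] = 0"
  and weight_Cons [simp]: "weight (b # w) = (if b then 2 else 1) + weight w"
  and weight_append [simp]: "weight (u @ w) = weight u + weight w"
  by (simp_all add: weight_def)

lemma weight_le_twice_length: "weight w \<le> 2 * length w"
  by (induction w) auto

definition wdiff :: "(bool list \<Rightarrow> 'k::field) \<Rightarrow> bool list \<Rightarrow> 'k" where
  "wdiff \<phi> w = (\<Sum>i\<in>{1..length w - 1}. (-1) ^ i *
      (if \<not> w ! (i - 1) \<and> \<not> w ! i then \<phi> (take (i - 1) w @ True # drop (Suc i) w) else 0))"

lemma wdiff_Nil [simp]: "wdiff \<phi> [] = 0"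
  by (simp add: wdiff_def)

lemma wdiff_Cons:
  "wdiff \<phi> (b # v) =
     (case v of [] \<Rightarrow> 0 | c # v' \<Rightarrow> if \<not> b \<and> \<not> c then - \<phi> (True # v') else 0)
     - wdiff (\<lambda>u. \<phi> (b # u)) v"
proof (cases v)
  case Nil
  then show ?thesis by (simp add: wdiff_def)
next
  case (Cons c v')
  let ?f = "\<lambda>i. (-1) ^ i * (if \<not> (b # v) ! (i - 1) \<and> \<not> (b # v) ! i
      then \<phi> (take (i - 1) (b # v) @ True # drop (Suc i) (b # v)) else 0)"
  have "wdiff \<phi> (b # v) = sum ?f {1..length v}" by (simp add: wdiff_def)
  also have "\<dots> = ?f 1 + sum ?f {Suc 1..Suc (length v - 1)}"
    using sum.atLeast_Suc_atMost[of 1 "length v" ?f] Cons by simp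
  also have "sum ?f {Suc 1..Suc (length v - 1)} = sum (\<lambda>j. ?f (Suc j)) {1..length v - 1}"
    by (rule sum.shift_bounds_cl_Suc_ivl)
  also have "\<dots> = - wdiff (\<lambda>u. \<phi> (b # u)) v"
    unfolding wdiff_def sum_negf[symmetric]
  proof (rule sum.cong[OF refl])
    fix j assume "j \<in> {1..length v - 1}"
    then obtain j' where "j = Suc j'" by (cases j) auto
    then show "?f (Suc j) = - ((-1) ^ j * (if \<not> v ! (j - 1) \<and> \<not> v ! j
        then \<phi> (b # (take (j - 1) v @ True # drop (Suc j) v)) else 0))"
      by simp
  qed
  finally show ?thesis using Cons by simp
qed

lemma wdiff_long_Cons: "wdiff f (True # v) = - wdiff (\<lambda>u. f (True # u)) v"
  using wdiff_Cons[of f True v] by (simp split: list.split)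

lemma wdiff_short_Cons:
  "wdiff f (False # v) = (case v of [] \<Rightarrow> 0 | c # v' \<Rightarrow> if c then 0 else - f (True # v'))
    - wdiff (\<lambda>u. f (False # u)) v"
  using wdiff_Cons[of f False v] by (simp split: list.split)

lemma wdiff_lincomb: "wdiff (\<lambda>u. a * f u + b * g u) w = a * wdiff f w + b * wdiff g w"
  unfolding wdiff_def sum_distrib_left sum.distrib[symmetric]
  by (intro sum.cong refl) (simp add: algebra_simps)

lemma wdiff_diff: "wdiff (\<lambda>u. f u - g u) w = wdiff f w - wdiff g w"
  using wdiff_lincomb[of 1 f "-1" g w] by simp

lemma wdiff_minus: "wdiff (\<phi> - \<psi>) = wdiff \<phi> - wdiff \<psi>"
  by (simp add: fun_eq_iff fun_diff_def wdiff_diff)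

lemma wdiff_zero [simp]: "wdiff (\<lambda>u. 0) w = 0"
  by (simp add: wdiff_def)

lemma wdiff_0 [simp]: "wdiff 0 = 0"
  by (simp add: fun_eq_iff wdiff_def zero_fun_def)

lemma wdiff_vanishing:
  assumes "\<And>u. f u = 0"
  shows "wdiff f w = 0"
proof -
  have "f = (\<lambda>u. 0)" using assms by auto
  then show ?thesis by simp
qed

lemma wdiff_wdiff: "wdiff (wdiff \<phi>) w = 0"
proof (induction w arbitrary: \<phi>)
  case Nil
  then show ?case by simp
next
  case (Cons b v)
  define g where
    "g u = (case u of [] \<Rightarrow> 0 | c # v' \<Rightarrow> if \<not> b \<and> \<not> c then - \<phi> (True # v') else 0)" for u
  have "wdiff (\<lambda>u. wdiff \<phi> (b # u)) v = wdiff g v - wdiff (wdiff (\<lambda>u. \<phi> (b # u))) v"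
    unfolding wdiff_Cons[of \<phi> b] g_def[symmetric] by (rule wdiff_diff)
  then have tail: "wdiff (\<lambda>u. wdiff \<phi> (b # u)) v = wdiff g v"
    using Cons.IH by simp
  have g: "wdiff g v =
      (case v of [] \<Rightarrow> 0 | c # v' \<Rightarrow> if \<not> b \<and> \<not> c then wdiff (\<lambda>u. \<phi> (True # u)) v' else 0)"
  proof (cases v)
    case (Cons c v')
    have "wdiff (\<lambda>u. g (c # u)) v' = (if \<not> b \<and> \<not> c then - wdiff (\<lambda>u. \<phi> (True # u)) v' else 0)"
      using wdiff_lincomb[of "-1" "\<lambda>u. \<phi> (True # u)" 0 _ v'] by (simp add: g_def)
    moreover have "(case v' of [] \<Rightarrow> 0 | d # v'' \<Rightarrow> if \<not> c \<and> \<not> d then - g (True # v'') else 0) = 0"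
      by (cases v') (auto simp: g_def)
    ultimately show ?thesis using Cons by (simp add: wdiff_Cons[of g c v'])
  qed simp
  show ?case
    unfolding wdiff_Cons[of "wdiff \<phi>" b v] tail g
    by (cases v) (auto simp: wdiff_long_Cons)
qed

definition wscale :: "'k::field \<Rightarrow> (bool list \<Rightarrow> 'k) \<Rightarrow> bool list \<Rightarrow> 'k" where
  "wscale c f = (\<lambda>w. c * f w)"

lemma wscale_apply [simp]: "wscale c f w = c * f w"
  by (simp add: wscale_def)

interpretation W: vector_space "wscale :: 'k::field \<Rightarrow> _"
  by unfold_locales (auto simp: wscale_def algebra_simps fun_eq_iff)

interpretation WW: vector_space_pair "wscale :: 'k::field \<Rightarrow> _" "wscale :: 'k \<Rightarrow> _"
  by unfold_locales

definition WCoch :: "nat \<Rightarrow> nat \<Rightarrow> (bool list \<Rightarrow> 'k::field) set" where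
  "WCoch N n = {\<phi>. \<forall>w. \<phi> w \<noteq> 0 \<longrightarrow> weight w = N \<and> length w = n}"

definition WCocyc :: "nat \<Rightarrow> nat \<Rightarrow> (bool list \<Rightarrow> 'k::field) set" where
  "WCocyc N n = {\<phi> \<in> WCoch N n. wdiff \<phi> = 0}"

definition WCobd :: "nat \<Rightarrow> nat \<Rightarrow> (bool list \<Rightarrow> 'k::field) set" where
  "WCobd N n = (if n = 0 then {0} else wdiff ` WCoch N (n - 1))"

definition wdim :: "'k::field itself \<Rightarrow> nat \<Rightarrow> nat \<Rightarrow> nat" where
  "wdim _ N n = W.dim (WCocyc N n :: (bool list \<Rightarrow> 'k) set) - W.dim (WCobd N n :: (bool list \<Rightarrow> 'k) set)"

lemma WCochD: "\<phi> \<in> WCoch N n \<Longrightarrow> \<phi> w \<noteq> 0 \<Longrightarrow> weight w = N \<and> length w = n"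
  by (auto simp: WCoch_def)

lemma WCochI: "(\<And>w. \<phi> w \<noteq> 0 \<Longrightarrow> weight w = N \<and> length w = n) \<Longrightarrow> \<phi> \<in> WCoch N n"
  by (auto simp: WCoch_def)

lemma WCoch_zero: "0 \<in> WCoch N n"
  by (auto simp: WCoch_def)

lemma split_at_adjacent:
  assumes "1 \<le> i" "i < length w"
  shows "take (i - 1) w @ w ! (i - 1) # w ! i # drop (Suc i) w = w"
proof -
  have "drop (i - 1) w = w ! (i - 1) # drop i w"
    using assms Cons_nth_drop_Suc[of "i - 1" w] by simp
  moreover have "drop i w = w ! i # drop (Suc i) w"
    using assms by (simp add: Cons_nth_drop_Suc)
  ultimately show ?thesis by (metis append_take_drop_id)
qed

lemma wdiff_WCoch:
  assumes "\<phi> \<in> WCoch N n"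
  shows "wdiff \<phi> \<in> WCoch N (Suc n)"
proof (rule WCochI)
  fix w assume "wdiff \<phi> w \<noteq> 0"
  then obtain i where i: "1 \<le> i" "i < length w" and c: "\<not> w ! (i - 1)" "\<not> w ! i"
    and p: "\<phi> (take (i - 1) w @ True # drop (Suc i) w) \<noteq> 0"
    unfolding wdiff_def by (auto elim: sum.not_neutral_contains_not_neutral split: if_splits)
  have w: "w = take (i - 1) w @ w ! (i - 1) # w ! i # drop (Suc i) w"
    using split_at_adjacent[OF i] by simp
  have "weight w = N" using WCochD[OF assms p] c by (subst w) simp
  moreover have "length w = Suc n" using WCochD[OF assms p] i by (simp, linarith)
  ultimately show "weight w = N \<and> length w = Suc n" by simp
qed

lemma linear_wdiff: "Vector_Spaces.linear wscale wscale (wdiff :: (bool list \<Rightarrow> 'k::field) \<Rightarrow> _)"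
proof -
  have "wdiff (\<phi> + \<psi>) = wdiff \<phi> + wdiff \<psi>" for \<phi> \<psi> :: "bool list \<Rightarrow> 'k"
    using wdiff_lincomb[of 1 \<phi> 1 \<psi>] by (simp add: fun_eq_iff plus_fun_def)
  moreover have "wdiff (wscale c \<phi>) = wscale c (wdiff \<phi>)" for c and \<phi> :: "bool list \<Rightarrow> 'k"
    using wdiff_lincomb[of c \<phi> 0 \<phi>] by (simp add: fun_eq_iff wscale_def)
  ultimately show ?thesis
    unfolding Vector_Spaces.linear_iff using W.vector_space_axioms by blast
qed

lemma subspace_WCoch: "W.subspace (WCoch N n :: (bool list \<Rightarrow> 'k::field) set)"
  unfolding W.subspace_def
proof (intro conjI ballI allI)
  show "0 \<in> WCoch N n" by (rule WCoch_zero)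
next
  fix \<phi> \<psi> :: "bool list \<Rightarrow> 'k" assume \<phi>: "\<phi> \<in> WCoch N n" and \<psi>: "\<psi> \<in> WCoch N n"
  show "\<phi> + \<psi> \<in> WCoch N n"
  proof (rule WCochI)
    fix w assume "(\<phi> + \<psi>) w \<noteq> 0"
    then have "\<phi> w \<noteq> 0 \<or> \<psi> w \<noteq> 0" by auto
    then show "weight w = N \<and> length w = n" using WCochD \<phi> \<psi> by blast
  qed
next
  fix c and \<phi> :: "bool list \<Rightarrow> 'k" assume "\<phi> \<in> WCoch N n"
  then show "wscale c \<phi> \<in> WCoch N n" by (auto simp: WCoch_def)
qed

lemma subspace_WCocyc: "W.subspace (WCocyc N n :: (bool list \<Rightarrow> 'k::field) set)"
proof -
  have "WCocyc N n = WCoch N n \<inter> {\<phi> :: bool list \<Rightarrow> 'k. wdiff \<phi> = 0}"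
    by (auto simp: WCocyc_def)
  then show ?thesis
    using W.subspace_inter[OF subspace_WCoch WW.linear_subspace_kernel[OF linear_wdiff]] by simp
qed

lemma subspace_WCobd: "W.subspace (WCobd N n :: (bool list \<Rightarrow> 'k::field) set)"
  using WW.linear_subspace_image[OF linear_wdiff subspace_WCoch]
  by (cases "n = 0") (simp_all add: WCobd_def)

lemma WCocyc_WCoch: "WCocyc N n \<subseteq> WCoch N n"
  by (auto simp: WCocyc_def)

lemma WCobd_WCocyc: "WCobd N n \<subseteq> (WCocyc N n :: (bool list \<Rightarrow> 'k::field) set)"
proof (cases n)
  case (Suc m)
  have "wdiff \<chi> \<in> WCocyc N (Suc m)" if "\<chi> \<in> WCoch N m" for \<chi> :: "bool list \<Rightarrow> 'k"
    using wdiff_WCoch[OF that] by (simp add: WCocyc_def fun_eq_iff wdiff_wdiff)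
  then show ?thesis using Suc by (auto simp: WCobd_def)
qed (simp add: WCobd_def WCocyc_def WCoch_zero)

lemma sum_fun_apply: "sum f S x = (\<Sum>y\<in>S. f y x)"
  by (induction S rule: infinite_finite_induct) auto

text \<open>Each WCoch N n is finite-dimensional: it is spanned by the indicators of the finitely many
  words of length n.\<close>
definition indicator_word :: "bool list \<Rightarrow> bool list \<Rightarrow> 'k::field" where
  "indicator_word w = (\<lambda>u. if u = w then 1 else 0)"

lemma WCoch_finite_dimensional:
  "\<exists>F. finite F \<and> WCoch N n \<subseteq> W.span (F :: (bool list \<Rightarrow> 'k::field) set)"
proof (intro exI conjI)
  let ?S = "{w :: bool list. length w = n}"
  have fin: "finite ?S"
    using finite_lists_length_eq[of "UNIV :: bool set" n] by simp
  then show "finite (indicator_word ` ?S :: (bool list \<Rightarrow> 'k) set)" by simp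
  show "WCoch N n \<subseteq> W.span (indicator_word ` ?S :: (bool list \<Rightarrow> 'k) set)"
  proof
    fix \<phi> :: "bool list \<Rightarrow> 'k" assume \<phi>: "\<phi> \<in> WCoch N n"
    have "\<phi> = (\<Sum>w\<in>?S. wscale (\<phi> w) (indicator_word w))"
    proof
      fix u
      have "(\<Sum>w\<in>?S. wscale (\<phi> w) (indicator_word w)) u = (if u \<in> ?S then \<phi> u else 0)"
        by (simp add: sum_fun_apply indicator_word_def if_distrib sum.delta'[OF fin] cong: if_cong)
      then show "\<phi> u = (\<Sum>w\<in>?S. wscale (\<phi> w) (indicator_word w)) u"
        using WCochD[OF \<phi>, of u] by auto
    qed
    also have "\<dots> \<in> W.span (indicator_word ` ?S)"
      by (intro W.span_sum W.span_scale W.span_base) auto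
    finally show "\<phi> \<in> W.span (indicator_word ` ?S)" .
  qed
qed

lemma WCoch_trivial:
  assumes "\<And>w :: bool list. weight w = N \<Longrightarrow> length w \<noteq> n"
  shows "WCoch N n = ({0} :: (bool list \<Rightarrow> 'k::field) set)"
  using assms WCoch_zero by (fastforce simp: WCoch_def)

lemma wdim_trivial:
  assumes "\<And>w :: bool list. weight w = N \<Longrightarrow> length w \<noteq> n"
  shows "wdim TYPE('k::field) N n = 0"
proof -
  have "WCocyc N n = ({0} :: (bool list \<Rightarrow> 'k) set)"
    using WCoch_trivial[OF assms] WCocyc_WCoch W.subspace_0[OF subspace_WCocyc] by blast
  then show ?thesis by (simp add: wdim_def W.dim_zero_subspace)
qed

lemma wdim_single_word:
  assumes w0: "\<And>w :: bool list. weight w = N \<and> length w = n \<longleftrightarrow> w = w0"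
    and longer: "\<And>w :: bool list. weight w = N \<Longrightarrow> length w \<noteq> Suc n"
    and shorter: "\<And>w :: bool list. weight w = N \<Longrightarrow> Suc (length w) \<noteq> n"
  shows "wdim TYPE('k::field) N n = 1"
proof -
  have "WCoch N (Suc n) = ({0} :: (bool list \<Rightarrow> 'k) set)"
    using longer by (rule WCoch_trivial)
  then have "wdiff \<phi> = 0" if "\<phi> \<in> WCoch N n" for \<phi> :: "bool list \<Rightarrow> 'k"
    using wdiff_WCoch[OF that] by simp
  then have cocycles: "WCocyc N n = (WCoch N n :: (bool list \<Rightarrow> 'k) set)"
    by (auto simp: WCocyc_def)
  have "WCobd N n = ({0} :: (bool list \<Rightarrow> 'k) set)"
  proof (cases n)
    case (Suc m)
    have "WCoch N m = ({0} :: (bool list \<Rightarrow> 'k) set)"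
    proof (rule WCoch_trivial)
      fix w :: "bool list" assume "weight w = N"
      then show "length w \<noteq> m" using shorter[of w] Suc by simp
    qed
    then show ?thesis using Suc by (simp add: WCobd_def)
  qed (simp add: WCobd_def)
  moreover have "W.dim (WCoch N n :: (bool list \<Rightarrow> 'k) set) = 1"
  proof (rule W.dim_unique[of "{indicator_word w0}"])
    have "weight w0 = N \<and> length w0 = n" using w0[of w0] by simp
    then show "{indicator_word w0} \<subseteq> (WCoch N n :: (bool list \<Rightarrow> 'k) set)"
      by (auto intro!: WCochI simp: indicator_word_def split: if_splits)
    show "WCoch N n \<subseteq> W.span {indicator_word w0 :: bool list \<Rightarrow> 'k}"
    proof
      fix \<phi> :: "bool list \<Rightarrow> 'k" assume \<phi>: "\<phi> \<in> WCoch N n"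
      have "\<phi> = wscale (\<phi> w0) (indicator_word w0)"
      proof
        fix u show "\<phi> u = wscale (\<phi> w0) (indicator_word w0) u"
          using WCochD[OF \<phi>, of u] w0[of u] by (auto simp: indicator_word_def)
      qed
      then show "\<phi> \<in> W.span {indicator_word w0}"
        by (metis W.span_base W.span_scale singletonI)
    qed
    have "indicator_word w0 \<noteq> (0 :: bool list \<Rightarrow> 'k)"
      by (auto simp: indicator_word_def fun_eq_iff)
    then show "W.independent {indicator_word w0 :: bool list \<Rightarrow> 'k}"
      by simp
  qed simp
  ultimately show ?thesis by (simp add: wdim_def cocycles W.dim_zero_subspace)
qed

section \<open>Periodicity of the word cohomology\<close>

text \<open>Both raise or lower weight by 3 and length by 2 and commute with the word differential.\<close>
definition lift :: "(bool list \<Rightarrow> 'k::field) \<Rightarrow> bool list \<Rightarrow> 'k" where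
  "lift \<psi> w = (case w of False # True # u \<Rightarrow> \<psi> u | True # False # u \<Rightarrow> \<psi> u | _ \<Rightarrow> 0)"

definition restrict :: "(bool list \<Rightarrow> 'k::field) \<Rightarrow> bool list \<Rightarrow> 'k" where
  "restrict \<phi> u = \<phi> (False # True # u)"

lemma lift_simps [simp]:
  "lift \<psi> [] = 0" "lift \<psi> [b] = 0"
  "lift \<psi> (False # True # u) = \<psi> u" "lift \<psi> (True # False # u) = \<psi> u"
  "lift \<psi> (False # False # u) = 0" "lift \<psi> (True # True # u) = 0"
  by (simp_all add: lift_def split: bool.split)

lemma restrict_lift [simp]: "restrict (lift \<psi>) = \<psi>"
  by (simp add: restrict_def fun_eq_iff)

lemma lift_0 [simp]: "lift 0 = 0" and restrict_0 [simp]: "restrict 0 = 0"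
  by (simp_all add: fun_eq_iff lift_def restrict_def split: list.split bool.split)

lemma wdiff_single [simp]: "wdiff \<phi> [b] = 0"
  by (simp add: wdiff_def)

lemma wdiff_lift: "wdiff (lift \<psi>) = lift (wdiff \<psi>)"
proof
  fix w
  show "wdiff (lift \<psi>) w = lift (wdiff \<psi>) w"
  proof (cases w rule: remdups_adj.cases)
    case (3 b c u)
    show ?thesis
    proof (cases b; cases c)
      assume "b" "c"
      have "wdiff (\<lambda>x. lift \<psi> (True # True # x)) u = 0" by (rule wdiff_vanishing) simp
      then show ?thesis using 3 \<open>b\<close> \<open>c\<close> by (simp add: wdiff_long_Cons)
    next
      assume "b" "\<not> c"
      have "wdiff (\<lambda>x. lift \<psi> (True # x)) (False # u) = - wdiff \<psi> u"
        by (simp add: wdiff_short_Cons split: list.split)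
      then show ?thesis using 3 \<open>b\<close> \<open>\<not> c\<close> by (simp add: wdiff_long_Cons)
    next
      assume "\<not> b" "c"
      have "wdiff (\<lambda>x. lift \<psi> (False # x)) (True # u) = - wdiff \<psi> u"
        by (simp add: wdiff_long_Cons)
      then show ?thesis using 3 \<open>\<not> b\<close> \<open>c\<close> by (simp add: wdiff_short_Cons)
    next
      assume "\<not> b" "\<not> c"
      have "wdiff (\<lambda>x. lift \<psi> (False # False # x)) u = 0" by (rule wdiff_vanishing) simp
      then have "wdiff (\<lambda>x. lift \<psi> (False # x)) (False # u) =
          (case u of [] \<Rightarrow> 0 | d # u' \<Rightarrow> if d then 0 else - \<psi> u')"
        by (simp add: wdiff_short_Cons[of _ u] split: list.split)
      moreover have "lift \<psi> (True # u) = (case u of [] \<Rightarrow> 0 | d # u' \<Rightarrow> if d then 0 else \<psi> u')"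
        by (cases u) (auto split: bool.split)
      ultimately show ?thesis using 3 \<open>\<not> b\<close> \<open>\<not> c\<close>
        by (simp add: wdiff_short_Cons[of _ "False # u"] split: list.split)
    qed
  qed simp_all
qed

lemma restrict_wdiff: "restrict (wdiff \<phi>) = wdiff (restrict \<phi>)"
  unfolding restrict_def by (rule ext) (simp add: wdiff_short_Cons wdiff_long_Cons)

lemma linear_lift: "Vector_Spaces.linear wscale wscale (lift :: (bool list \<Rightarrow> 'k::field) \<Rightarrow> _)"
  unfolding Vector_Spaces.linear_iff using W.vector_space_axioms
  by (auto simp: fun_eq_iff lift_def algebra_simps split: list.split bool.split)

lemma lift_WCoch:
  assumes "\<psi> \<in> WCoch M m"
  shows "lift \<psi> \<in> WCoch (M + 3) (m + 2)"
proof (rule WCochI)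
  fix w assume "lift \<psi> w \<noteq> 0"
  then obtain b c u where "w = b # c # u" "b \<noteq> c" "\<psi> u \<noteq> 0"
    by (auto simp: lift_def split: list.splits bool.splits)
  then show "weight w = M + 3 \<and> length w = m + 2" using WCochD[OF assms] by auto
qed

lemma restrict_WCoch:
  assumes "\<phi> \<in> WCoch (M + 3) (m + 2)"
  shows "restrict \<phi> \<in> WCoch M m"
proof (rule WCochI)
  fix u assume "restrict \<phi> u \<noteq> 0"
  then show "weight u = M \<and> length u = m"
    using WCochD[OF assms, of "False # True # u"] by (simp add: restrict_def)
qed

text \<open>A cocycle of weight at least 2 that vanishes on all words beginning with short.long is a
  coboundary, with the explicit primitive \<chi>(long.v) = -\<phi>(short.short.v).\<close>
lemma cocycle_vanishing_on_short_long:
  fixes \<phi> :: "bool list \<Rightarrow> 'k::field"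
  assumes N: "2 \<le> N" and \<phi>: "\<phi> \<in> WCocyc N n"
    and vanish: "\<And>u. \<phi> (False # True # u) = 0"
  shows "\<phi> \<in> WCobd N n"
proof -
  have \<phi>C: "\<phi> \<in> WCoch N n" and cyc: "wdiff \<phi> = 0" using \<phi> by (auto simp: WCocyc_def)
  have short_words: "\<phi> w = 0" if "length w < 2" "\<not> (\<exists>v. w = True # v)" for w
    using WCochD[OF \<phi>C, of w] that N by (cases w rule: remdups_adj.cases) auto
  show ?thesis
  proof (cases n)
    case 0
    have "\<phi> = 0" using short_words WCochD[OF \<phi>C] 0 by fastforce
    then show ?thesis using 0 by (simp add: WCobd_def)
  next
    case (Suc m)
    define \<chi> :: "bool list \<Rightarrow> 'k" where
      "\<chi> w = (case w of True # v \<Rightarrow> - \<phi> (False # False # v) | _ \<Rightarrow> 0)" for w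
    have \<chi>C: "\<chi> \<in> WCoch N m"
    proof (rule WCochI)
      fix w assume "\<chi> w \<noteq> 0"
      then obtain v where "w = True # v" "\<phi> (False # False # v) \<noteq> 0"
        by (auto simp: \<chi>_def split: list.splits bool.splits)
      then show "weight w = N \<and> length w = m" using WCochD[OF \<phi>C, of "False # False # v"] Suc by auto
    qed
    have "wdiff \<chi> w = \<phi> w" for w
    proof (cases w)
      case (Cons b v)
      show ?thesis
      proof (cases b)
        case True
        have "wdiff (\<lambda>u. \<phi> (False # u)) (False # v) = - wdiff (\<lambda>u. \<phi> (False # False # u)) v"
          using vanish by (simp add: wdiff_short_Cons[of _ v] split: list.split)
        moreover have "wdiff \<phi> (False # False # v) = 0" using cyc by simp
        ultimately have "\<phi> (True # v) = wdiff (\<lambda>u. \<phi> (False # False # u)) v"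
          by (simp add: wdiff_short_Cons[of _ "False # v"])
        moreover have "wdiff \<chi> (True # v) = wdiff (\<lambda>u. \<phi> (False # False # u)) v"
          using wdiff_lincomb[of "-1" "\<lambda>u. \<phi> (False # False # u)" 0 _ v]
          by (simp add: wdiff_long_Cons \<chi>_def)
        ultimately show ?thesis using Cons True by simp
      next
        case False
        have "wdiff (\<lambda>u. \<chi> (False # u)) v = 0" by (rule wdiff_vanishing) (simp add: \<chi>_def)
        then show ?thesis
          using Cons False vanish short_words[of "[False]"]
          by (cases v) (auto simp: wdiff_short_Cons \<chi>_def split: bool.split)
      qed
    qed (use short_words in simp)
    then have "\<phi> = wdiff \<chi>" by auto
    then show ?thesis using \<chi>C Suc by (auto simp: WCobd_def)
  qed
qed

text \<open>The three facts making lift an isomorphism of cohomology H(M, m) \<cong> H(M + 3, m + 2):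
  it maps coboundaries to coboundaries, every cocycle is a lifted cocycle up to a coboundary, and
  a lifted cocycle that is a coboundary is the lift of a coboundary.\<close>
lemma lift_WCobd: "lift ` WCobd M m \<subseteq> (WCobd (M + 3) (m + 2) :: (bool list \<Rightarrow> 'k::field) set)"
proof
  fix x :: "bool list \<Rightarrow> 'k" assume "x \<in> lift ` WCobd M m"
  then obtain \<psi> where \<psi>: "\<psi> \<in> WCobd M m" "x = lift \<psi>" by blast
  show "x \<in> WCobd (M + 3) (m + 2)"
  proof (cases m)
    case 0
    then have "x = 0" using \<psi> by (simp add: WCobd_def)
    then show ?thesis using W.subspace_0[OF subspace_WCobd] by simp
  next
    case (Suc m')
    then obtain \<chi> where "\<chi> \<in> WCoch M m'" "\<psi> = wdiff \<chi>" using \<psi> by (auto simp: WCobd_def)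
    then have "lift \<chi> \<in> WCoch (M + 3) (m + 1)" "x = wdiff (lift \<chi>)"
      using lift_WCoch \<psi>(2) Suc by (auto simp: wdiff_lift)
    then show ?thesis by (auto simp: WCobd_def)
  qed
qed

lemma WCocyc_decompose:
  fixes z :: "bool list \<Rightarrow> 'k::field"
  assumes z: "z \<in> WCocyc (M + 3) (m + 2)"
  shows "restrict z \<in> WCocyc M m" and "z - lift (restrict z) \<in> WCobd (M + 3) (m + 2)"
proof -
  have zC: "z \<in> WCoch (M + 3) (m + 2)" and cyc: "wdiff z = 0"
    using z by (auto simp: WCocyc_def)
  show r: "restrict z \<in> WCocyc M m"
    using restrict_WCoch[OF zC] cyc restrict_wdiff[of z] by (simp add: WCocyc_def)
  have "lift (restrict z) \<in> WCoch (M + 3) (m + 2)" using lift_WCoch restrict_WCoch[OF zC] by blast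
  then have "z - lift (restrict z) \<in> WCoch (M + 3) (m + 2)"
    using W.subspace_diff[OF subspace_WCoch zC] by blast
  moreover have "wdiff (z - lift (restrict z)) = 0"
    using cyc r by (simp add: wdiff_minus wdiff_lift WCocyc_def)
  ultimately show "z - lift (restrict z) \<in> WCobd (M + 3) (m + 2)"
    by (intro cocycle_vanishing_on_short_long) (auto simp: WCocyc_def restrict_def)
qed

lemma lift_Int_WCobd:
  "lift ` WCocyc M m \<inter> WCobd (M + 3) (m + 2) \<subseteq> lift ` (WCobd M m :: (bool list \<Rightarrow> 'k::field) set)"
proof
  fix x :: "bool list \<Rightarrow> 'k" assume x: "x \<in> lift ` WCocyc M m \<inter> WCobd (M + 3) (m + 2)"
  then obtain \<psi> where \<psi>: "x = lift \<psi>" by blast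
  from x obtain \<chi> where \<chi>: "\<chi> \<in> WCoch (M + 3) (m + 1)" "x = wdiff \<chi>"
    by (auto simp: WCobd_def)
  have "lift \<psi> = wdiff \<chi>" using \<psi> \<chi>(2) by simp
  then have "restrict (lift \<psi>) = restrict (wdiff \<chi>)" by (rule arg_cong)
  then have \<psi>_eq: "\<psi> = wdiff (restrict \<chi>)" by (simp add: restrict_wdiff)
  have "\<psi> \<in> WCobd M m"
  proof (cases m)
    case 0
    have "\<chi> (False # True # u) = 0" for u
      using WCochD[OF \<chi>(1), of "False # True # u"] 0 by auto
    then have "restrict \<chi> = 0" by (simp add: restrict_def fun_eq_iff)
    then show ?thesis using \<psi>_eq 0 by (simp add: WCobd_def)
  next
    case (Suc m')
    have "restrict \<chi> \<in> WCoch M m'"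
    proof (rule WCochI)
      fix w assume "restrict \<chi> w \<noteq> 0"
      then show "weight w = M \<and> length w = m'"
        using WCochD[OF \<chi>(1), of "False # True # w"] Suc by (simp add: restrict_def)
    qed
    then show ?thesis using \<psi>_eq Suc by (simp add: WCobd_def)
  qed
  then show "x \<in> lift ` WCobd M m" using \<psi> by blast
qed

text \<open>By the subquotient dimension count, lift induces H(M, m) \<cong> H(M + 3, m + 2).\<close>
lemma wdim_shift: "wdim TYPE('k::field) (M + 3) (m + 2) = wdim TYPE('k) M m"
proof -
  let ?Z = "WCocyc (M + 3) (m + 2) :: (bool list \<Rightarrow> 'k) set"
  let ?B = "WCobd (M + 3) (m + 2) :: (bool list \<Rightarrow> 'k) set"
  let ?Z' = "lift ` (WCocyc M m :: (bool list \<Rightarrow> 'k) set)"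
  let ?B' = "lift ` (WCobd M m :: (bool list \<Rightarrow> 'k) set)"
  have inj: "inj_on lift S" for S :: "(bool list \<Rightarrow> 'k) set"
    by (rule inj_on_inverseI[of _ restrict]) simp
  obtain F where F: "finite F" "?Z \<subseteq> W.span F"
    using WCoch_finite_dimensional[of "M + 3" "m + 2"] WCocyc_WCoch by blast
  have "W.dim ?Z - W.dim ?B = W.dim ?Z' - W.dim ?B'"
  proof (rule W.dim_diff_eq_of_sum_Int)
    show "W.subspace ?B" by (rule subspace_WCobd)
    show "?B' \<subseteq> ?B" by (rule lift_WCobd)
    show "?B \<subseteq> ?Z" by (rule WCobd_WCocyc)
    show "?Z' \<inter> ?B \<subseteq> ?B'" by (rule lift_Int_WCobd)
    show "?Z \<subseteq> W.span F" "finite F" using F by simp_all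
    show "W.subspace ?Z'" "W.subspace ?B'"
      by (rule WW.linear_subspace_image[OF linear_lift subspace_WCocyc]
          WW.linear_subspace_image[OF linear_lift subspace_WCobd])+
    show "?B' \<subseteq> ?Z'" using WCobd_WCocyc by blast
    show "?Z' \<subseteq> ?Z"
    proof
      fix x assume "x \<in> ?Z'"
      then obtain \<psi> where "\<psi> \<in> WCocyc M m" "x = lift \<psi>" by blast
      then show "x \<in> ?Z" using lift_WCoch by (auto simp: WCocyc_def wdiff_lift)
    qed
    show "\<exists>a b. a \<in> ?Z' \<and> b \<in> ?B \<and> z = a + b" if "z \<in> ?Z" for z
      using WCocyc_decompose[OF that] by (intro exI[of _ "lift (restrict z)"] exI[of _ "z - lift (restrict z)"]) auto
  qed
  then show ?thesis
    unfolding wdim_def WW.dim_image_inj[OF linear_lift inj] .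
qed

lemma weight_eq_0: "weight w = 0 \<longleftrightarrow> w = []"
  by (cases w) auto

lemma weight_eq_1: "weight w = 1 \<longleftrightarrow> w = [False]"
  by (cases w rule: remdups_adj.cases) (auto simp: weight_eq_0 split: if_splits)

lemma wdim_weight_0: "wdim TYPE('k::field) 0 n = (if n = 0 then 1 else 0)"
proof (cases "n = 0")
  case True
  have "wdim TYPE('k) 0 0 = 1"
  proof (rule wdim_single_word)
    show "weight w = 0 \<and> length w = 0 \<longleftrightarrow> w = []" for w :: "bool list"
      by auto
    show "weight w = 0 \<Longrightarrow> length w \<noteq> Suc 0" for w :: "bool list"
      using weight_eq_0[of w] by auto
  qed simp
  then show ?thesis using True by simp
next
  case False
  have "wdim TYPE('k) 0 n = 0"
  proof (rule wdim_trivial)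
    fix w :: "bool list" assume "weight w = 0"
    then show "length w \<noteq> n" using weight_eq_0[of w] False by simp
  qed
  then show ?thesis using False by simp
qed

lemma wdim_weight_1: "wdim TYPE('k::field) 1 n = (if n = 1 then 1 else 0)"
proof (cases "n = 1")
  case True
  have "wdim TYPE('k) 1 1 = 1"
  proof (rule wdim_single_word)
    show "weight w = 1 \<and> length w = 1 \<longleftrightarrow> w = [False]" for w :: "bool list"
      using weight_eq_1[of w] by auto
    show "weight w = 1 \<Longrightarrow> length w \<noteq> Suc 1" for w :: "bool list"
      using weight_eq_1[of w] by auto
    show "weight w = 1 \<Longrightarrow> Suc (length w) \<noteq> 1" for w :: "bool list"
      using weight_eq_1[of w] by auto
  qed
  then show ?thesis using True by simp
next
  case False
  have "wdim TYPE('k) 1 n = 0"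
  proof (rule wdim_trivial)
    fix w :: "bool list" assume "weight w = 1"
    then show "length w \<noteq> n" using weight_eq_1[of w] False by simp
  qed
  then show ?thesis using False by simp
qed

lemma wdim_weight_2: "wdim TYPE('k::field) 2 n = 0"
proof -
  have "\<phi> \<in> WCobd 2 n" if \<phi>: "\<phi> \<in> WCocyc 2 n" for \<phi> :: "bool list \<Rightarrow> 'k"
  proof (rule cocycle_vanishing_on_short_long[OF _ \<phi>])
    fix u
    have "weight (False # True # u) \<noteq> 2" by simp
    then show "\<phi> (False # True # u) = 0"
      using \<phi> WCochD[of \<phi> 2 n "False # True # u"] by (auto simp: WCocyc_def)
  qed simp
  then have "WCocyc 2 n = (WCobd 2 n :: (bool list \<Rightarrow> 'k) set)"
    using WCobd_WCocyc by blast
  then show ?thesis by (simp add: wdim_def)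
qed

lemma wdim_short_words:
  assumes "3 \<le> N" "n < 2"
  shows "wdim TYPE('k::field) N n = 0"
proof (rule wdim_trivial)
  fix w :: "bool list" assume "weight w = N"
  then show "length w \<noteq> n" using weight_le_twice_length[of w] assms by linarith
qed

lemma wdim_formula:
  "wdim TYPE('k::field) N n = (if 2 * N = 3 * n \<or> 2 * N + 1 = 3 * n then 1 else 0)"
proof (induction N arbitrary: n rule: less_induct)
  case (less N)
  show ?case
  proof (cases "3 \<le> N \<and> 2 \<le> n")
    case True
    define M m where "M = N - 3" and "m = n - 2"
    have N: "N = M + 3" and n: "n = m + 2" using True by (auto simp: M_def m_def)
    have "wdim TYPE('k) N n = wdim TYPE('k) M m"
      unfolding N n by (rule wdim_shift)
    then show ?thesis using less.IH[of M m] N n by auto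
  next
    case False
    then consider "N = 0" | "N = 1" | "N = 2" | "3 \<le> N" "n < 2" by linarith
    then show ?thesis
    proof cases
      case 1
      then have "(2 * N = 3 * n \<or> 2 * N + 1 = 3 * n) \<longleftrightarrow> n = 0" by presburger
      then show ?thesis using 1 wdim_weight_0[where 'k = 'k, of n] by simp
    next
      case 2
      then have "(2 * N = 3 * n \<or> 2 * N + 1 = 3 * n) \<longleftrightarrow> n = 1" by presburger
      then show ?thesis using 2 wdim_weight_1[where 'k = 'k, of n] by simp
    next
      case 3 then show ?thesis by (simp add: wdim_weight_2) presburger
    next
      case 4 then show ?thesis by (simp add: wdim_short_words)
    qed
  qed
qed

section \<open>Basis tensors as paths in the quiver of B\<close>

text \<open>Every basis element a of B_+ is an arrow from the idempotent src a (src a * a = a) to the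
  idempotent tgt a (a * tgt a = a).  The short arrows eta : L \<rightarrow> O and theta : O \<rightarrow> L switch the
  vertex, the long arrows xi_L : L \<rightarrow> L and xi : O \<rightarrow> O keep it.\<close>
fun src :: "bas \<Rightarrow> bas" where
  "src theta = idO" | "src eta = idL" | "src xi = idO" | "src xiL = idL" | "src idL = idL" | "src idO = idO"

fun tgt :: "bas \<Rightarrow> bas" where
  "tgt theta = idL" | "tgt eta = idO" | "tgt xi = idO" | "tgt xiL = idL" | "tgt idL = idL" | "tgt idO = idO"

text \<open>A nonzero basis tensor (e, a_1 ... a_n) of B_+^{\<otimes>_R n} is a path in the quiver starting at e.\<close>
fun is_path :: "bas \<Rightarrow> bas list \<Rightarrow> bool" where
  "is_path e [] = (e \<in> Rbas)"
| "is_path e (a # p) = (e \<in> Rbas \<and> a \<in> Bplus \<and> src a = e \<and> is_path (tgt a) p)"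

fun path_end :: "bas \<Rightarrow> bas list \<Rightarrow> bas" where
  "path_end e [] = e"
| "path_end e (a # p) = path_end (tgt a) p"

text \<open>The word of a path marks its long arrows.  Each vertex has exactly one short and one long
  outgoing arrow, so a path is determined by its start and its word (path_of inverts word_of).\<close>
definition word_of :: "bas list \<Rightarrow> bool list" where
  "word_of p = map (\<lambda>a. a = xi \<or> a = xiL) p"

fun letter_at :: "bas \<Rightarrow> bool \<Rightarrow> bas" where
  "letter_at idL False = eta" | "letter_at idL True = xiL"
| "letter_at s False = theta" | "letter_at s True = xi"

fun path_of :: "bas \<Rightarrow> bool list \<Rightarrow> bas list" where
  "path_of s [] = []"
| "path_of s (b # c) = letter_at s b # path_of (tgt (letter_at s b)) c"

lemma Rbas_iff: "e \<in> Rbas \<longleftrightarrow> e = idL \<or> e = idO"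
  by (auto simp: Rbas_def)

lemma Bplus_iff: "a \<in> Bplus \<longleftrightarrow> a = theta \<or> a = eta \<or> a = xi \<or> a = xiL"
  by (auto simp: Bplus_def)

lemma mult_left: "e \<in> Rbas \<Longrightarrow> a \<in> Bplus \<Longrightarrow> mult e a = Some a \<longleftrightarrow> e = src a"
  by (auto simp: Rbas_iff Bplus_iff)

lemma mult_right: "f \<in> Rbas \<Longrightarrow> a \<in> Bplus \<Longrightarrow> mult a f = Some a \<longleftrightarrow> f = tgt a"
  by (auto simp: Rbas_iff Bplus_iff)

lemma tgt_R: "a \<in> Bplus \<Longrightarrow> tgt a \<in> Rbas"
  and src_R: "a \<in> Bplus \<Longrightarrow> src a \<in> Rbas"
  and mult_src: "a \<in> Bplus \<Longrightarrow> mult (src a) a = Some a"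
  by (auto simp: Rbas_iff Bplus_iff)

lemma composable_iff: "a \<in> Bplus \<Longrightarrow> b \<in> Bplus \<Longrightarrow>
  (\<exists>f\<in>Rbas. mult a f = Some a \<and> mult f b = Some b) \<longleftrightarrow> tgt a = src b"
  by (auto simp: Rbas_def Bplus_iff)

lemma successively_iff_nth:
  "successively P xs \<longleftrightarrow> (\<forall>i. Suc i < length xs \<longrightarrow> P (xs ! i) (xs ! Suc i))"
proof (induction xs rule: induct_list012)
  case (3 x y zs)
  then show ?case by (auto simp: nth_Cons split: nat.split)
qed simp_all

lemma is_path_iff:
  "is_path e p \<longleftrightarrow> e \<in> Rbas \<and> set p \<subseteq> Bplus \<and> lcompat e p \<and> successively (\<lambda>a b. tgt a = src b) p"
proof (induction p arbitrary: e)
  case (Cons a p)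
  then show ?case
    by (cases p) (auto simp: mult_left tgt_R src_R mult_src)
qed simp

lemma TB_iff: "(e, p) \<in> TB n \<longleftrightarrow> length p = n \<and> is_path e p"
proof -
  have "(\<forall>i. Suc i < length p \<longrightarrow> (\<exists>f\<in>Rbas. mult (p ! i) f = Some (p ! i) \<and>
            mult f (p ! Suc i) = Some (p ! Suc i))) \<longleftrightarrow> successively (\<lambda>a b. tgt a = src b) p"
    if "set p \<subseteq> Bplus"
  proof -
    have "(\<exists>f\<in>Rbas. mult (p ! i) f = Some (p ! i) \<and> mult f (p ! Suc i) = Some (p ! Suc i))
        \<longleftrightarrow> tgt (p ! i) = src (p ! Suc i)" if "Suc i < length p" for i
    proof -
      have "p ! i \<in> Bplus" "p ! Suc i \<in> Bplus"
        using that \<open>set p \<subseteq> Bplus\<close> nth_mem[of i p] nth_mem[of "Suc i" p] by auto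
      then show ?thesis by (rule composable_iff)
    qed
    then show ?thesis by (auto simp: successively_iff_nth)
  qed
  then show ?thesis unfolding TB_def is_path_iff by auto
qed

lemma is_path_R: "is_path e p \<Longrightarrow> e \<in> Rbas"
  by (cases p) auto

lemma is_path_set: "is_path e p \<Longrightarrow> set p \<subseteq> Bplus"
  and lcompat_is_path: "is_path e p \<Longrightarrow> lcompat e p"
  by (simp_all add: is_path_iff)

lemma is_path_src_unique: "is_path e p \<Longrightarrow> is_path e' p \<Longrightarrow> p \<noteq> [] \<Longrightarrow> e = e'"
  by (cases p) auto

lemma is_path_append: "is_path e (u @ w) \<longleftrightarrow> is_path e u \<and> is_path (path_end e u) w"
  by (induction u arbitrary: e) (auto dest: is_path_R)

lemma path_end_append: "path_end e (u @ w) = path_end (path_end e u) w"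
  by (induction u arbitrary: e) auto

lemma is_path_last:
  "is_path e p \<Longrightarrow> p \<noteq> [] \<Longrightarrow> path_end e p = tgt (last p) \<and> last p \<in> Bplus"
  by (induction p arbitrary: e rule: induct_list012) auto

lemma length_word_of [simp]: "length (word_of p) = length p"
  and word_of_Nil [simp]: "word_of [] = []"
  and word_of_Cons [simp]: "word_of (a # p) = (a = xi \<or> a = xiL) # word_of p"
  by (simp_all add: word_of_def)

lemma tdeg_Nil [simp]: "tdeg [] = 0"
  and tdeg_Cons [simp]: "tdeg (a # p) = deg a + tdeg p"
  by (simp_all add: tdeg_def)

text \<open>Weight of the word versus internal degree of the path: short arrows of degree 1 (eta) and 0
  (theta) alternate, long arrows have degree 1.  The correction term records the end points.\<close>
definition at_O :: "bas \<Rightarrow> int" where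
  "at_O e = (if e = idO then 1 else 0)"

lemma weight_word_of:
  "is_path e p \<Longrightarrow> int (weight (word_of p)) = 2 * int (tdeg p) + at_O e - at_O (path_end e p)"
proof (induction p arbitrary: e)
  case (Cons a p)
  then have a: "a \<in> Bplus" "src a = e" "is_path (tgt a) p" by auto
  show ?case using Cons.IH[OF a(3)] a by (auto simp: Bplus_iff at_O_def)
qed simp

lemma path_of_is_path:
  "s \<in> Rbas \<Longrightarrow> is_path s (path_of s c) \<and> word_of (path_of s c) = c"
proof (induction c arbitrary: s)
  case (Cons b c)
  have "letter_at s b \<in> Bplus" "src (letter_at s b) = s" "(letter_at s b = xi \<or> letter_at s b = xiL) = b"
    using Cons.prems by (cases b; auto simp: Rbas_iff Bplus_iff)+
  then show ?case using Cons.IH[OF tgt_R] Cons.prems by simp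
qed simp

lemma path_of_word_of: "is_path s p \<Longrightarrow> path_of s (word_of p) = p"
proof (induction p arbitrary: s)
  case (Cons a p)
  then have "a \<in> Bplus" "src a = s" "is_path (tgt a) p" by auto
  then show ?case using Cons.IH by (auto simp: Bplus_iff)
qed simp

text \<open>Multiplying two adjacent arrows of a path is nonzero exactly for theta.eta = xi and
  eta.theta = xi_L, i.e. for two adjacent short letters; the result is again a path with the same
  end points, whose word has the two short letters contracted into one long one.\<close>
lemma mult_adjacent_word_of:
  assumes "is_path e a" "1 \<le> i" "i < length a"
  shows "mult (a ! (i - 1)) (a ! i) \<noteq> None \<longleftrightarrow> \<not> word_of a ! (i - 1) \<and> \<not> word_of a ! i"
proof -
  have "a = take (i - 1) a @ a ! (i - 1) # a ! i # drop (Suc i) a"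
    using split_at_adjacent[OF assms(2,3)] by simp
  then have "is_path (path_end e (take (i - 1) a)) (a ! (i - 1) # a ! i # drop (Suc i) a)"
    using assms(1) is_path_append by metis
  then have "a ! (i - 1) \<in> Bplus" "a ! i \<in> Bplus" "tgt (a ! (i - 1)) = src (a ! i)" by auto
  then show ?thesis using assms(2,3) by (auto simp: Bplus_iff word_of_def)
qed

lemma merge_adjacent:
  assumes path: "is_path e a" and i: "1 \<le> i" "i < length a"
    and prod: "mult (a ! (i - 1)) (a ! i) = Some c"
  defines "q \<equiv> take (i - 1) a @ c # drop (Suc i) a"
  shows "is_path e q" and "path_end e q = path_end e a"
    and "word_of q = take (i - 1) (word_of a) @ True # drop (Suc i) (word_of a)"
proof -
  let ?u = "take (i - 1) a" and ?v = "drop (Suc i) a"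
  have split: "a = ?u @ a ! (i - 1) # a ! i # ?v" using split_at_adjacent[OF i] by simp
  have u: "is_path e ?u" and xy: "is_path (path_end e ?u) (a ! (i - 1) # a ! i # ?v)"
    using path is_path_append[of e ?u] split by metis+
  have "(a ! (i - 1) = theta \<and> a ! i = eta \<and> c = xi) \<or> (a ! (i - 1) = eta \<and> a ! i = theta \<and> c = xiL)"
    using xy prod by (auto simp: Bplus_iff)
  then have c: "is_path (path_end e ?u) (c # ?v)" "c = xi \<or> c = xiL"
    and "path_end (path_end e ?u) (c # ?v) = path_end (path_end e ?u) (a ! (i - 1) # a ! i # ?v)"
    using xy by (auto simp: Rbas_iff Bplus_iff)
  then show "is_path e q" "path_end e q = path_end e a"
    unfolding q_def using u is_path_append path_end_append split by metis+
  show "word_of q = take (i - 1) (word_of a) @ True # drop (Suc i) (word_of a)"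
    unfolding q_def using c(2) by (auto simp: word_of_def take_map drop_map)
qed

section \<open>The Hochschild complex with coefficients in \<langle>eta\<rangle> is the word complex\<close>

lemma Mbas_eq: "Mbas = {eta}"
  by (auto simp: Mbas_def B1bas_def Ibas_def)

lemma lactM_eq: "lactM b v y = (if y = eta \<and> b = idL then v eta else 0)"
  by (cases b) (auto simp: lactM_def Mbas_eq)

lemma ractM_eq: "ractM v b y = (if y = eta \<and> b = idO then v eta else 0)"
  by (cases b) (auto simp: ractM_def Mbas_eq)

text \<open>Hence a cochain only sees the paths from L to O, and the transfer of a word cochain \<psi> is the
  cochain taking the value \<psi>(word_of p) at eta on each such path p.\<close>
definition full_path :: "bas list \<Rightarrow> bool" where
  "full_path p \<longleftrightarrow> is_path idL p \<and> path_end idL p = idO"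

definition transfer :: "(bool list \<Rightarrow> 'k::field) \<Rightarrow> (bas \<times> bas list) \<Rightarrow> bas \<Rightarrow> 'k" where
  "transfer \<psi> x y = (if y = eta \<and> fst x = idL \<and> full_path (snd x) then \<psi> (word_of (snd x)) else 0)"

lemma transfer_0 [simp]: "transfer 0 = 0"
  by (simp add: fun_eq_iff transfer_def)

lemma full_path_weight: "full_path p \<Longrightarrow> int (weight (word_of p)) = 2 * int (tdeg p) - 1"
  using weight_word_of[of idL p] by (simp add: full_path_def at_O_def)

lemma rcompat_iff_path_end:
  assumes "is_path idL p" "p \<noteq> []" "f \<in> Rbas"
  shows "rcompat (e, p) f \<longleftrightarrow> f = path_end idL p"
  using is_path_last[OF assms(1,2)] mult_right[OF assms(3)] assms(2) by (auto simp: rcompat_def)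

lemma cochain_support:
  assumes \<phi>: "\<phi> \<in> Cochains n m" and nz: "\<phi> (e, p) y \<noteq> 0"
  shows "y = eta \<and> e = idL \<and> full_path p \<and> length p = n \<and> 1 = int (tdeg p) + m"
proof -
  have supp: "\<And>x y. \<phi> x y \<noteq> 0 \<Longrightarrow> x \<in> TB n \<and> y \<in> Mbas \<and> int (deg y) = int (tdeg (snd x)) + m"
    and bimod: "\<And>f x. f \<in> Rbas \<Longrightarrow> x \<in> TB n \<Longrightarrow>
        lactM f (\<phi> x) = (if fst x = f then \<phi> x else (\<lambda>_. 0)) \<and>
        ractM (\<phi> x) f = (if rcompat x f then \<phi> x else (\<lambda>_. 0))"
    using \<phi> by (auto simp: Cochains_def)
  have TB: "(e, p) \<in> TB n" and y: "y = eta" and deg: "1 = int (tdeg p) + m"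
    using supp[OF nz] by (auto simp: Mbas_eq)
  have path: "is_path e p" "length p = n" using TB TB_iff by auto
  have eta_only: "\<phi> (e, p) = (\<lambda>y'. if y' = eta then \<phi> (e, p) eta else 0)"
    using supp[of "(e, p)"] by (auto simp: fun_eq_iff Mbas_eq)
  have "lactM idO (\<phi> (e, p)) = (\<lambda>_. 0)" by (simp add: fun_eq_iff lactM_eq)
  then have "e \<noteq> idO" using bimod[OF _ TB, of idO] nz by (auto simp: Rbas_def fun_eq_iff)
  then have eL: "e = idL" using is_path_R[OF path(1)] by (auto simp: Rbas_def)
  have "ractM (\<phi> (e, p)) idO = \<phi> (e, p)"
    by (subst (2) eta_only) (simp add: fun_eq_iff ractM_eq)
  have rc: "rcompat (e, p) idO"
  proof (rule ccontr)
    assume "\<not> rcompat (e, p) idO"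
    then have "\<phi> (e, p) = (\<lambda>_. 0)"
      using bimod[OF _ TB, of idO] \<open>ractM (\<phi> (e, p)) idO = \<phi> (e, p)\<close> by (simp add: Rbas_def)
    then show False using nz by simp
  qed
  then have "p \<noteq> []" using eL by (auto simp: rcompat_def)
  then have "path_end idL p = idO"
    using rcompat_iff_path_end[of p idO e] rc path(1) eL by (simp add: Rbas_def)
  then show ?thesis using path eL y deg by (simp add: full_path_def)
qed

lemma transfer_Cochains:
  fixes \<psi> :: "bool list \<Rightarrow> 'k::field"
  assumes \<psi>: "\<psi> \<in> WCoch (2 * D + 1) n"
  shows "transfer \<psi> \<in> Cochains n (- int D)"
  unfolding Cochains_def
proof (intro CollectI conjI allI impI ballI)
  fix x y assume "transfer \<psi> x y \<noteq> 0"
  then have c: "y = eta" "fst x = idL" "full_path (snd x)" and nz: "\<psi> (word_of (snd x)) \<noteq> 0"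
    by (auto simp: transfer_def split: if_splits)
  have w: "weight (word_of (snd x)) = 2 * D + 1" "length (snd x) = n"
    using WCochD[OF \<psi> nz] by auto
  then show "int (deg y) = int (tdeg (snd x)) + - int D"
    using full_path_weight[OF c(3)] c(1) by simp
  show "x \<in> TB n" using c(2,3) w(2) TB_iff[of idL "snd x" n] by (cases x) (simp add: full_path_def)
  show "y \<in> Mbas" using c by (simp add: Mbas_eq)
next
  fix f x assume f: "f \<in> Rbas"
  show "lactM f (transfer \<psi> x) = (if fst x = f then transfer \<psi> x else (\<lambda>_. 0))"
    using f by (auto simp: fun_eq_iff lactM_eq transfer_def Rbas_iff)
  have "rcompat x f \<longleftrightarrow> f = idO" if "full_path (snd x)"
    using that rcompat_iff_path_end[of "snd x" f "fst x"] f
    by (cases "snd x = []") (auto simp: full_path_def)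
  then show "ractM (transfer \<psi> x) f = (if rcompat x f then transfer \<psi> x else (\<lambda>_. 0))"
    by (auto simp: fun_eq_iff ractM_eq transfer_def)
qed

text \<open>A word of odd weight read as a path from L ends at O, so \<psi> can be read off its transfer.\<close>
lemma transfer_recover:
  fixes \<psi> :: "bool list \<Rightarrow> 'k::field"
  assumes \<psi>: "\<psi> \<in> WCoch (2 * D + 1) n"
  shows "\<psi> w = transfer \<psi> (idL, path_of idL w) eta"
proof (cases "\<psi> w = 0")
  case False
  let ?p = "path_of idL w"
  have p: "is_path idL ?p" "word_of ?p = w" using path_of_is_path[of idL w] by (auto simp: Rbas_def)
  have "int (2 * D + 1) = 2 * int (tdeg ?p) - at_O (path_end idL ?p)"
    using weight_word_of[OF p(1)] WCochD[OF \<psi> False] p(2) by (simp add: at_O_def)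
  then have "at_O (path_end idL ?p) \<noteq> 0" by presburger
  then have "path_end idL ?p = idO" by (simp add: at_O_def split: if_splits)
  then show ?thesis using p by (simp add: transfer_def full_path_def)
qed (use path_of_is_path[of idL w] in \<open>simp add: transfer_def Rbas_def\<close>)

lemma transfer_inj:
  fixes \<psi> \<psi>' :: "bool list \<Rightarrow> 'k::field"
  assumes "\<psi> \<in> WCoch (2 * D + 1) n" "\<psi>' \<in> WCoch (2 * D + 1) n" "transfer \<psi> = transfer \<psi>'"
  shows "\<psi> = \<psi>'"
  using transfer_recover[OF assms(1)] transfer_recover[OF assms(2)] assms(3) by auto

lemma transfer_onto:
  fixes \<phi> :: "(bas \<times> bas list) \<Rightarrow> bas \<Rightarrow> 'k::field"
  assumes \<phi>: "\<phi> \<in> Cochains n (- int D)"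
  shows "\<phi> \<in> transfer ` WCoch (2 * D + 1) n"
proof
  define \<psi> :: "bool list \<Rightarrow> 'k" where
    "\<psi> w = (if weight w = 2 * D + 1 \<and> length w = n then \<phi> (idL, path_of idL w) eta else 0)" for w
  show "\<psi> \<in> WCoch (2 * D + 1) n" by (rule WCochI) (auto simp: \<psi>_def split: if_splits)
  show "\<phi> = transfer \<psi>"
  proof (intro ext)
    fix x :: "bas \<times> bas list" and y :: bas
    obtain e p where x: "x = (e, p)" by (cases x)
    show "\<phi> x y = transfer \<psi> x y"
    proof (cases "\<phi> x y = 0")
      case True
      have "weight (word_of p) = 2 * D + 1 \<and> length p = n \<Longrightarrow> \<phi> (idL, p) eta = 0"
        if "y = eta" "e = idL" "full_path p"
        using True x that by simp
      then show ?thesis using True x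
        by (auto simp: transfer_def \<psi>_def full_path_def path_of_word_of)
    next
      case False
      then have s: "y = eta" "e = idL" "full_path p" "length p = n" "1 = int (tdeg p) - int D"
        using cochain_support[OF \<phi>] x by auto
      then have "weight (word_of p) = 2 * D + 1" using full_path_weight[OF s(3)] by simp
      then show ?thesis using s x by (simp add: transfer_def \<psi>_def path_of_word_of full_path_def)
    qed
  qed
qed

text \<open>The differential: the outer terms vanish because B_+ acts by zero on M, and an inner term is
  nonzero only when two adjacent short arrows are multiplied, which is the word differential.\<close>
lemma ev_transfer: "ev (transfer \<psi>) q y = (if lcompat idL q then transfer \<psi> (idL, q) y else 0)"
proof -
  let ?S = "{e \<in> Rbas. lcompat e q}"
  have "ev (transfer \<psi>) q y = (\<Sum>e\<in>?S. if e = idL then transfer \<psi> (e, q) y else 0)"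
    unfolding ev_def by (rule sum.cong) (auto simp: transfer_def)
  also have "\<dots> = (if idL \<in> ?S then transfer \<psi> (idL, q) y else 0)"
    by (rule sum.delta) (simp add: Rbas_def)
  finally show ?thesis by (simp add: Rbas_def)
qed

lemma inner_term_transfer:
  fixes \<psi> :: "bool list \<Rightarrow> 'k::field"
  assumes path: "is_path e a" and i: "1 \<le> i" "i < length a"
  shows "(case mult (a ! (i - 1)) (a ! i) of None \<Rightarrow> 0
           | Some c \<Rightarrow> ev (transfer \<psi>) (take (i - 1) a @ c # drop (Suc i) a) y) =
         (if y = eta \<and> e = idL \<and> full_path a then
            (if \<not> word_of a ! (i - 1) \<and> \<not> word_of a ! i
             then \<psi> (take (i - 1) (word_of a) @ True # drop (Suc i) (word_of a)) else 0)
          else 0)"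
proof (cases "mult (a ! (i - 1)) (a ! i)")
  case None
  then show ?thesis using mult_adjacent_word_of[OF path i] by auto
next
  case (Some c)
  let ?q = "take (i - 1) a @ c # drop (Suc i) a"
  note q = merge_adjacent[OF path i Some]
  have short: "\<not> word_of a ! (i - 1) \<and> \<not> word_of a ! i"
    using mult_adjacent_word_of[OF path i] Some by auto
  show ?thesis
  proof (cases "e = idL")
    case True
    have "full_path ?q \<longleftrightarrow> full_path a" using q path True by (simp add: full_path_def)
    then show ?thesis using Some True short q lcompat_is_path[OF q(1)]
      by (simp add: ev_transfer transfer_def)
  next
    case False
    have "\<not> full_path ?q" using is_path_src_unique[OF q(1)] False by (auto simp: full_path_def)
    then show ?thesis using Some False by (simp add: ev_transfer transfer_def)
  qed
qed

lemma hdelta_transfer_on_path: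
  fixes \<psi> :: "bool list \<Rightarrow> 'k::field"
  assumes path: "is_path e a" and len: "length a = Suc n"
  shows "hdelta n (transfer \<psi>) (e, a) y = transfer (wdiff \<psi>) (e, a) y"
proof -
  have "a \<noteq> []" using len by auto
  then have "hd a \<in> Bplus" "last a \<in> Bplus"
    using is_path_set[OF path] hd_in_set last_in_set by blast+
  then have outer: "hd a \<noteq> idL" "last a \<noteq> idO" by (auto simp: Bplus_def)
  have "hdelta n (transfer \<psi>) (e, a) y = (\<Sum>i\<in>{1..n}. (-1) ^ i *
         (case mult (a ! (i - 1)) (a ! i) of None \<Rightarrow> 0
          | Some c \<Rightarrow> ev (transfer \<psi>) (take (i - 1) a @ c # drop (Suc i) a) y))"
    using path len outer by (simp add: hdelta_def Let_def lactM_eq ractM_eq TB_iff)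
  also have "\<dots> = (\<Sum>i\<in>{1..n}. (-1) ^ i *
       (if y = eta \<and> e = idL \<and> full_path a then
          (if \<not> word_of a ! (i - 1) \<and> \<not> word_of a ! i
           then \<psi> (take (i - 1) (word_of a) @ True # drop (Suc i) (word_of a)) else 0)
        else 0))"
  proof (rule sum.cong[OF refl])
    fix i assume "i \<in> {1..n}"
    then have "1 \<le> i" "i < length a" using len by auto
    from inner_term_transfer[OF path this, of \<psi> y]
    show "(-1) ^ i * (case mult (a ! (i - 1)) (a ! i) of None \<Rightarrow> 0
          | Some c \<Rightarrow> ev (transfer \<psi>) (take (i - 1) a @ c # drop (Suc i) a) y) =
        (-1) ^ i * (if y = eta \<and> e = idL \<and> full_path a then
          (if \<not> word_of a ! (i - 1) \<and> \<not> word_of a ! i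
           then \<psi> (take (i - 1) (word_of a) @ True # drop (Suc i) (word_of a)) else 0)
        else 0)"
      by (simp only:)
  qed
  also have "\<dots> = (if y = eta \<and> e = idL \<and> full_path a then wdiff \<psi> (word_of a) else 0)"
  proof (cases "y = eta \<and> e = idL \<and> full_path a")
    case True
    then show ?thesis using len by (simp add: wdiff_def)
  next
    case False
    then show ?thesis by (simp only: if_False mult_zero_right sum.neutral_const)
  qed
  also have "\<dots> = transfer (wdiff \<psi>) (e, a) y" by (simp add: transfer_def)
  finally show ?thesis .
qed

lemma hdelta_transfer:
  fixes \<psi> :: "bool list \<Rightarrow> 'k::field"
  assumes \<psi>: "\<psi> \<in> WCoch N n"
  shows "hdelta n (transfer \<psi>) = transfer (wdiff \<psi>)"
proof (intro ext)
  fix x :: "bas \<times> bas list" and y :: bas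
  obtain e a where x: "x = (e, a)" by (cases x)
  show "hdelta n (transfer \<psi>) x y = transfer (wdiff \<psi>) x y"
  proof (cases "x \<in> TB (Suc n)")
    case False
    have "transfer (wdiff \<psi>) x y = 0"
    proof (rule ccontr)
      assume "transfer (wdiff \<psi>) x y \<noteq> 0"
      then have c: "e = idL" "full_path a" and nz: "wdiff \<psi> (word_of a) \<noteq> 0"
        using x by (auto simp: transfer_def split: if_splits)
      have "length a = Suc n" using WCochD[OF wdiff_WCoch[OF \<psi>] nz] by simp
      then have "x \<in> TB (Suc n)" using c x by (simp add: TB_iff full_path_def)
      then show False using False by simp
    qed
    then show ?thesis using False by (simp add: hdelta_def)
  next
    case True
    then show ?thesis using x hdelta_transfer_on_path TB_iff by auto
  qed
qed

lemma vector_space_cscale: "vector_space (cscale :: 'k::field \<Rightarrow> _)"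
  by unfold_locales (auto simp: cscale_def algebra_simps fun_eq_iff)

interpretation C: vector_space "cscale :: 'k::field \<Rightarrow> _"
  by (rule vector_space_cscale)

interpretation WC: vector_space_pair "wscale :: 'k::field \<Rightarrow> _" "cscale :: 'k \<Rightarrow> _"
  by unfold_locales

lemma linear_transfer: "Vector_Spaces.linear wscale cscale (transfer :: (bool list \<Rightarrow> 'k::field) \<Rightarrow> _)"
proof -
  have "transfer (a + b) = transfer a + transfer b" "transfer (wscale c a) = cscale c (transfer a)"
    for a b :: "bool list \<Rightarrow> 'k" and c
    by (simp_all add: fun_eq_iff transfer_def cscale_def)
  then show ?thesis
    unfolding Vector_Spaces.linear_iff using W.vector_space_axioms vector_space_cscale by blast
qed

lemma Cochains_eq:
  "Cochains n (- int D) = transfer ` (WCoch (2 * D + 1) n :: (bool list \<Rightarrow> 'k::field) set)"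
  using transfer_onto transfer_Cochains by blast

lemma Cocycles_eq:
  "Cocycles n (- int D) = transfer ` (WCocyc (2 * D + 1) n :: (bool list \<Rightarrow> 'k::field) set)"
proof -
  have cocycle: "hdelta n (transfer \<psi>) = 0 \<longleftrightarrow> wdiff \<psi> = 0"
    if "\<psi> \<in> WCoch (2 * D + 1) n" for \<psi> :: "bool list \<Rightarrow> 'k"
    using hdelta_transfer[OF that] transfer_inj[OF wdiff_WCoch[OF that] WCoch_zero] by auto
  show ?thesis
  proof
    show "Cocycles n (- int D) \<subseteq> transfer ` (WCocyc (2 * D + 1) n :: (bool list \<Rightarrow> 'k) set)"
      using cocycle by (auto simp: Cocycles_def WCocyc_def Cochains_eq)
    show "transfer ` (WCocyc (2 * D + 1) n :: (bool list \<Rightarrow> 'k) set) \<subseteq> Cocycles n (- int D)"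
      using cocycle by (auto simp: Cocycles_def WCocyc_def Cochains_eq)
  qed
qed

lemma Coboundaries_eq:
  "Coboundaries n (- int D) = transfer ` (WCobd (2 * D + 1) n :: (bool list \<Rightarrow> 'k::field) set)"
proof (cases n)
  case (Suc m)
  have "Coboundaries n (- int D) = hdelta m ` transfer ` (WCoch (2 * D + 1) m :: (bool list \<Rightarrow> 'k) set)"
    using Suc by (simp add: Coboundaries_def Cochains_eq)
  also have "\<dots> = transfer ` wdiff ` (WCoch (2 * D + 1) m :: (bool list \<Rightarrow> 'k) set)"
    unfolding image_image by (rule image_cong[OF refl]) (rule hdelta_transfer)
  finally show ?thesis using Suc by (simp add: WCobd_def)
qed (simp add: Coboundaries_def WCobd_def)

lemma dim_transfer:
  assumes "W.subspace S" "S \<subseteq> (WCoch (2 * D + 1) n :: (bool list \<Rightarrow> 'k::field) set)"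
  shows "C.dim (transfer ` S) = W.dim S"
proof -
  have "inj_on transfer S" using transfer_inj assms(2) by (meson inj_onI subsetD)
  moreover have "W.span S = S" using assms(1) by simp
  ultimately have "inj_on transfer (W.span S)" by (simp only:)
  then show ?thesis by (rule WC.dim_image_inj[OF linear_transfer])
qed

lemma HHdim_nonpositive_degree:
  "HHdim TYPE('k::field) n (- int D) = wdim TYPE('k) (2 * D + 1) n"
  unfolding HHdim_def wdim_def Cocycles_eq Coboundaries_eq
    dim_transfer[OF subspace_WCocyc WCocyc_WCoch]
    dim_transfer[OF subspace_WCobd order_trans[OF WCobd_WCocyc WCocyc_WCoch]] ..

text \<open>\<dots> and in positive internal degree there are no cochains at all, since a full path has
  internal degree at least 1.\<close>
lemma HHdim_positive_degree:
  assumes "1 \<le> m"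
  shows "HHdim TYPE('k::field) n m = 0"
proof -
  have "\<phi> = 0" if "\<phi> \<in> Cochains n m" for \<phi> :: "(bas \<times> bas list) \<Rightarrow> bas \<Rightarrow> 'k"
  proof (intro ext)
    fix x :: "bas \<times> bas list" and y :: bas
    obtain e p where x: "x = (e, p)" by (cases x)
    show "\<phi> x y = 0 x y"
    proof (rule ccontr)
      assume "\<phi> x y \<noteq> 0 x y"
      then have fp: "full_path p" and deg: "1 = int (tdeg p) + m"
        using cochain_support[OF that] x by auto
      have "int (tdeg p) = 0" using deg assms by linarith
      then show False using full_path_weight[OF fp] by simp
    qed
  qed
  then have "Cocycles n m \<subseteq> C.span ({} :: ((bas \<times> bas list) \<Rightarrow> bas \<Rightarrow> 'k) set)"
    by (auto simp: Cocycles_def C.span_empty)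
  then have "C.dim (Cocycles n m :: ((bas \<times> bas list) \<Rightarrow> bas \<Rightarrow> 'k) set) = 0"
    using C.dim_le_card[OF _ finite.emptyI] by simp
  then show ?thesis unfolding HHdim_def by simp
qed

text \<open>Along the line of internal degree k - n (k \<ge> 1), the cohomology is one-dimensional exactly
  for n = 4k - 3 and n = 4k - 2: there 2(2(n - k) + 1) equals 3n or 3n - 1.\<close>
lemma HHdim_diagonal:
  assumes k: "1 \<le> k"
  shows "HHdim TYPE('k::field) n (int k - int n) = (if n = 4 * k - 3 \<or> n = 4 * k - 2 then 1 else 0)"
proof (cases "k \<le> n")
  case True
  define D where "D = n - k"
  have degree: "int k - int n = - int D" using True D_def by simp
  have "HHdim TYPE('k) n (int k - int n) = wdim TYPE('k) (2 * D + 1) n"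
    unfolding degree by (rule HHdim_nonpositive_degree)
  also have "\<dots> = (if 2 * (2 * D + 1) = 3 * n \<or> 2 * (2 * D + 1) + 1 = 3 * n then 1 else 0)"
    by (rule wdim_formula)
  also have "(2 * (2 * D + 1) = 3 * n \<or> 2 * (2 * D + 1) + 1 = 3 * n) \<longleftrightarrow> (n = 4 * k - 3 \<or> n = 4 * k - 2)"
    using True k D_def by auto
  finally show ?thesis .
next
  case False
  then have "1 \<le> int k - int n" and "\<not> (n = 4 * k - 3 \<or> n = 4 * k - 2)" using k by auto
  then show ?thesis using HHdim_positive_degree by simp
qed

theorem mainTheorem6:
  assumes "(2::'k::field) \<noteq> 0" and "(3::'k) \<noteq> 0"
  shows "(\<forall>n. HHdim TYPE('k) n (1 - int n) = (if n \<in> {1, 2} then 1 else 0)) \<and>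
         (\<forall>n. HHdim TYPE('k) n (2 - int n) = (if n \<in> {5, 6} then 1 else 0)) \<and>
         (\<forall>n. HHdim TYPE('k) n (3 - int n) = (if n \<in> {9, 10} then 1 else 0)) \<and>
         (\<forall>n. HHdim TYPE('k) n (4 - int n) = (if n \<in> {13, 14} then 1 else 0))"
proof (intro conjI allI)
  fix n
  show "HHdim TYPE('k) n (1 - int n) = (if n \<in> {1, 2} then 1 else 0)"
    using HHdim_diagonal[of 1 n] by auto
  show "HHdim TYPE('k) n (2 - int n) = (if n \<in> {5, 6} then 1 else 0)"
    using HHdim_diagonal[of 2 n] by auto
  show "HHdim TYPE('k) n (3 - int n) = (if n \<in> {9, 10} then 1 else 0)"
    using HHdim_diagonal[of 3 n] by auto
  show "HHdim TYPE('k) n (4 - int n) = (if n \<in> {13, 14} then 1 else 0)"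
    using HHdim_diagonal[of 4 n] by auto
qed

end
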